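(* Consider a base station whose users are partitioned into groups $\mathcal{U}_k$, $k\in\mathcal{K}$, where all users of group $k$ are assigned the common attenuation $\ell_k>0$ (group $\mathcal{U}_k$ consists of users $u$ with $|\ell_u-\ell_k|\le\varepsilon_\ell$). User $u$ has traffic demand $T_u>0$, and $T_k=\sum_{u\in\mathcal{U}_k}T_u$. Let constants $g,N_0,\Gamma>0$, $c\in(0,1)$ and a total bandwidth $W>0$ be given. Group-level problem: maximize $\mathit{EE}=\frac{c\sum_k T_k}{\sum_k P_k}$ over $(W_k,P_k)_{k\in\mathcal{K}}$ subject to $P_k=\frac{gN_0\Gamma}{\ell_k}\left(2^{T_k/W_k}-1\right)W_k$ and $\sum_{k\in\mathcal{K}}W_k=W$. Given a solution $(W_k,P_k)_{k}$ of this problem, the optimal allocation of bandwidth $w_u$ and power $p_u=\frac{gN_0\Gamma}{\ell_k}(2^{T_u/w_u}-1)w_u$ to an individual user $u\in\mathcal{U}_k$ (with $\sum_{u\in\mathcal{U}_k}w_u=W_k$) is $w_u=W_k\frac{T_u}{T_k}$, and the power spectral density $\delta p_u\triangleq p_u/w_u$ is the same for all users of the group and equal to $\delta P_k\triangleq P_k/W_k$.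
   Context: Model: downlink OFDMA single cell with Rayleigh fading; $p_u$ is the minimum transmit power ensuring the outage condition $\mathbb{P}(C_u\ge T_u)=c$ with $C_u=w_u\log_2(1+\mathit{SNR}_u/\Gamma)$, $\mathit{SNR}_u=p_uh_f\ell_u/(w_uN_0)$, $h_f$ exponential with mean $1/\tau$, $g=\tau/\ln(1/c)$. $W_k=\sum_{u\in\mathcal{U}_k}w_u$, $P_k=\sum_{u\in\mathcal{U}_k}p_u$. *)

theory Defs
  imports Complex_Main
begin

definition req_power :: "real \<Rightarrow> real \<Rightarrow> real \<Rightarrow> real \<Rightarrow> real \<Rightarrow> real \<Rightarrow> real" where
  "req_power g N0 Gam l t w = g * N0 * Gam / l * (2 powr (t / w) - 1) * w"

definition group_traffic :: "('k \<Rightarrow> 'u set) \<Rightarrow> ('u \<Rightarrow> real) \<Rightarrow> 'k \<Rightarrow> real" where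
  "group_traffic U T k = (\<Sum>u\<in>U k. T u)"

definition group_feasible ::
  "real \<Rightarrow> real \<Rightarrow> real \<Rightarrow> real \<Rightarrow> 'k set \<Rightarrow> ('k \<Rightarrow> 'u set) \<Rightarrow> ('k \<Rightarrow> real) \<Rightarrow> ('u \<Rightarrow> real)
   \<Rightarrow> ('k \<Rightarrow> real) \<Rightarrow> ('k \<Rightarrow> real) \<Rightarrow> bool" where
  "group_feasible g N0 Gam W K U ell T Wk Pk \<longleftrightarrow>
     (\<forall>k\<in>K. 0 < Wk k \<and> Pk k = req_power g N0 Gam (ell k) (group_traffic U T k) (Wk k))
     \<and> (\<Sum>k\<in>K. Wk k) = W"

definition group_EE :: "real \<Rightarrow> 'k set \<Rightarrow> ('k \<Rightarrow> 'u set) \<Rightarrow> ('u \<Rightarrow> real) \<Rightarrow> ('k \<Rightarrow> real) \<Rightarrow> real" where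
  "group_EE c K U T Pk = c * (\<Sum>k\<in>K. group_traffic U T k) / (\<Sum>k\<in>K. Pk k)"

definition group_optimal ::
  "real \<Rightarrow> real \<Rightarrow> real \<Rightarrow> real \<Rightarrow> real \<Rightarrow> 'k set \<Rightarrow> ('k \<Rightarrow> 'u set) \<Rightarrow> ('k \<Rightarrow> real) \<Rightarrow> ('u \<Rightarrow> real)
   \<Rightarrow> ('k \<Rightarrow> real) \<Rightarrow> ('k \<Rightarrow> real) \<Rightarrow> bool" where
  "group_optimal c g N0 Gam W K U ell T Wk Pk \<longleftrightarrow>
     group_feasible g N0 Gam W K U ell T Wk Pk \<and>
     (\<forall>Wk' Pk'. group_feasible g N0 Gam W K U ell T Wk' Pk' \<longrightarrow>
        group_EE c K U T Pk' \<le> group_EE c K U T Pk)"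

definition user_feasible :: "'k set \<Rightarrow> ('k \<Rightarrow> 'u set) \<Rightarrow> ('k \<Rightarrow> real) \<Rightarrow> ('u \<Rightarrow> real) \<Rightarrow> bool" where
  "user_feasible K U Wk w \<longleftrightarrow>
     (\<forall>k\<in>K. (\<forall>u\<in>U k. 0 < w u) \<and> (\<Sum>u\<in>U k. w u) = Wk k)"

definition user_power ::
  "real \<Rightarrow> real \<Rightarrow> real \<Rightarrow> ('k \<Rightarrow> real) \<Rightarrow> ('u \<Rightarrow> real) \<Rightarrow> 'k \<Rightarrow> ('u \<Rightarrow> real) \<Rightarrow> 'u \<Rightarrow> real" where
  "user_power g N0 Gam ell T k w u = req_power g N0 Gam (ell k) (T u) (w u)"

definition user_EE ::
  "real \<Rightarrow> real \<Rightarrow> real \<Rightarrow> real \<Rightarrow> 'k set \<Rightarrow> ('k \<Rightarrow> 'u set) \<Rightarrow> ('k \<Rightarrow> real) \<Rightarrow> ('u \<Rightarrow> real)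
   \<Rightarrow> ('u \<Rightarrow> real) \<Rightarrow> real" where
  "user_EE c g N0 Gam K U ell T w =
     c * (\<Sum>k\<in>K. \<Sum>u\<in>U k. T u) / (\<Sum>k\<in>K. \<Sum>u\<in>U k. user_power g N0 Gam ell T k w u)"

definition user_optimal ::
  "real \<Rightarrow> real \<Rightarrow> real \<Rightarrow> real \<Rightarrow> 'k set \<Rightarrow> ('k \<Rightarrow> 'u set) \<Rightarrow> ('k \<Rightarrow> real) \<Rightarrow> ('u \<Rightarrow> real)
   \<Rightarrow> ('k \<Rightarrow> real) \<Rightarrow> ('u \<Rightarrow> real) \<Rightarrow> bool" where
  "user_optimal c g N0 Gam K U ell T Wk w \<longleftrightarrow>
     user_feasible K U Wk w \<and>
     (\<forall>w'. user_feasible K U Wk w' \<longrightarrow>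
        user_EE c g N0 Gam K U ell T w' \<le> user_EE c g N0 Gam K U ell T w)"

end

theory Submission
  imports Defs
begin

text \<open>
  Within group \<open>k\<close> the user powers add up to \<open>g N\<^sub>0 \<Gamma> / \<ell>\<^sub>k\<close> times
  \<open>\<Sum>\<^sub>u w\<^sub>u (2^(T\<^sub>u/w\<^sub>u) - 1)\<close>. The map \<open>(t, w) \<mapsto> w (2^(t/w) - 1)\<close> is the perspective
  of the convex function \<open>2^x - 1\<close>, so summing the tangent lines of \<open>2^x\<close> at
  \<open>T\<^sub>k/W\<^sub>k\<close> shows that it is subadditive, with equality exactly when every ratio
  \<open>T\<^sub>u/w\<^sub>u\<close> equals \<open>T\<^sub>k/W\<^sub>k\<close>, by strict convexity. Hence every feasible allocation
  needs at least the group power \<open>P\<^sub>k\<close>, and precisely the proportional one attains it.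
  Since the throughput in the numerator of the energy efficiency is fixed, maximising it
  means minimising total power. The common ratio \<open>T\<^sub>u/w\<^sub>u = T\<^sub>k/W\<^sub>k\<close> also makes the
  power spectral density of every user equal to \<open>P\<^sub>k/W\<^sub>k\<close>.
\<close>

lemma powr_eq_powr_mult_exp:
  fixes b :: real
  assumes "0 < b"
  shows "b powr x = b powr x0 * exp (ln b * (x - x0))"
  using assms by (simp add: powr_def exp_add[symmetric] algebra_simps)

lemma powr_ge_tangent:
  fixes b :: real
  assumes "0 < b"
  shows "b powr x0 * (1 + ln b * (x - x0)) \<le> b powr x"
  unfolding powr_eq_powr_mult_exp[OF assms, of x x0]
  by (rule mult_left_mono) simp_all

lemma powr_gt_tangent_iff:
  fixes b :: real
  assumes "0 < b" "b \<noteq> 1"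
  shows "b powr x0 * (1 + ln b * (x - x0)) < b powr x \<longleftrightarrow> x \<noteq> x0"
proof -
  have "1 + y < exp y \<longleftrightarrow> y \<noteq> 0" for y :: real
    using exp_minus_greater[of "-y"] by simp
  moreover have "ln b \<noteq> 0" using assms by simp
  ultimately show ?thesis
    unfolding powr_eq_powr_mult_exp[OF assms(1), of x x0] using assms(1) by simp
qed

definition rate_cost :: "real \<Rightarrow> real \<Rightarrow> real" where
  "rate_cost t w = w * (2 powr (t / w) - 1)"

lemma rate_cost_minus_tangent:
  assumes "0 < w"
  shows "rate_cost t w - (w * (2 powr x0 - 1) + 2 powr x0 * ln 2 * (t - x0 * w))
         = w * (2 powr (t / w) - 2 powr x0 * (1 + ln 2 * (t / w - x0)))"
proof -
  define r where "r = t / w"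
  have "t = w * r" unfolding r_def using assms by simp
  then show ?thesis
    unfolding rate_cost_def r_def[symmetric] by (simp add: algebra_simps)
qed

lemma rate_cost_ge_tangent:
  assumes "0 < w"
  shows "w * (2 powr x0 - 1) + 2 powr x0 * ln 2 * (t - x0 * w) \<le> rate_cost t w"
proof -
  have "0 \<le> w * (2 powr (t / w) - 2 powr x0 * (1 + ln 2 * (t / w - x0)))"
    using powr_ge_tangent[of 2 x0 "t / w"] assms by simp
  then show ?thesis using rate_cost_minus_tangent[OF assms, of t x0] by linarith
qed

lemma rate_cost_eq_tangent_iff:
  assumes "0 < w"
  shows "w * (2 powr x0 - 1) + 2 powr x0 * ln 2 * (t - x0 * w) = rate_cost t w \<longleftrightarrow> t = x0 * w"
proof -
  define tangent where "tangent = 2 powr x0 * (1 + ln 2 * (t / w - x0))"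
  have "w * (2 powr x0 - 1) + 2 powr x0 * ln 2 * (t - x0 * w) = rate_cost t w
        \<longleftrightarrow> w * (2 powr (t / w) - tangent) = 0"
    unfolding tangent_def rate_cost_minus_tangent[OF assms, of t x0, symmetric] by linarith
  also have "\<dots> \<longleftrightarrow> \<not> tangent < 2 powr (t / w)"
    using powr_ge_tangent[of 2 x0 "t / w"] assms unfolding tangent_def by auto
  also have "\<dots> \<longleftrightarrow> t / w = x0"
    using powr_gt_tangent_iff[of 2 x0 "t / w"] unfolding tangent_def by simp
  also have "\<dots> \<longleftrightarrow> t = x0 * w"
    using assms by (simp add: divide_eq_eq)
  finally show ?thesis .
qed

lemma sum_eq_sum_iff_of_le:
  fixes f g :: "'a \<Rightarrow> real"
  assumes "finite A" "\<And>x. x \<in> A \<Longrightarrow> f x \<le> g x"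
  shows "sum f A = sum g A \<longleftrightarrow> (\<forall>x\<in>A. f x = g x)"
proof -
  have "sum f A = sum g A \<longleftrightarrow> (\<Sum>x\<in>A. g x - f x) = 0"
    by (auto simp: sum_subtractf)
  also have "\<dots> \<longleftrightarrow> (\<forall>x\<in>A. g x - f x = 0)"
    using assms by (intro sum_nonneg_eq_0_iff) auto
  finally show ?thesis by auto
qed

lemma sum_rate_cost_tangent:
  fixes T w :: "'a \<Rightarrow> real"
  assumes "0 < sum w S"
  defines "x0 \<equiv> sum T S / sum w S"
  shows "(\<Sum>u\<in>S. w u * (2 powr x0 - 1) + 2 powr x0 * ln 2 * (T u - x0 * w u))
         = rate_cost (sum T S) (sum w S)"
proof -
  define a where "a = 2 powr x0 - 1 - 2 powr x0 * ln 2 * x0"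
  define b where "b = 2 powr x0 * ln (2::real)"
  have T_sum: "sum T S = x0 * sum w S" unfolding x0_def using assms(1) by simp
  have "(\<Sum>u\<in>S. w u * (2 powr x0 - 1) + 2 powr x0 * ln 2 * (T u - x0 * w u))
        = (\<Sum>u\<in>S. a * w u + b * T u)"
    unfolding a_def b_def by (simp add: algebra_simps)
  also have "\<dots> = a * sum w S + b * sum T S"
    by (simp add: sum.distrib sum_distrib_left)
  also have "\<dots> = rate_cost (sum T S) (sum w S)"
    unfolding rate_cost_def x0_def[symmetric] unfolding T_sum a_def b_def
    using assms(1) by (simp add: algebra_simps)
  finally show ?thesis .
qed

lemma rate_cost_sum_le:
  fixes T w :: "'a \<Rightarrow> real"
  assumes "finite S" "\<And>u. u \<in> S \<Longrightarrow> 0 < w u"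
  shows "rate_cost (sum T S) (sum w S) \<le> (\<Sum>u\<in>S. rate_cost (T u) (w u))"
proof (cases "S = {}")
  case True
  then show ?thesis by (simp add: rate_cost_def)
next
  case False
  then have "0 < sum w S" using assms by (simp add: sum_pos)
  then have "rate_cost (sum T S) (sum w S) = (\<Sum>u\<in>S. w u * (2 powr (sum T S / sum w S) - 1)
      + 2 powr (sum T S / sum w S) * ln 2 * (T u - sum T S / sum w S * w u))"
    by (rule sum_rate_cost_tangent[symmetric])
  also have "\<dots> \<le> (\<Sum>u\<in>S. rate_cost (T u) (w u))"
    using assms(2) by (intro sum_mono rate_cost_ge_tangent)
  finally show ?thesis .
qed

lemma rate_cost_sum_eq_iff:
  fixes T w :: "'a \<Rightarrow> real"
  assumes "finite S" "\<And>u. u \<in> S \<Longrightarrow> 0 < w u"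
  shows "rate_cost (sum T S) (sum w S) = (\<Sum>u\<in>S. rate_cost (T u) (w u))
         \<longleftrightarrow> (\<forall>u\<in>S. T u * sum w S = sum T S * w u)"
proof (cases "S = {}")
  case True
  then show ?thesis by (simp add: rate_cost_def)
next
  case False
  then have W_pos: "0 < sum w S" using assms by (simp add: sum_pos)
  define x0 where "x0 = sum T S / sum w S"
  define tangent where
    "tangent u = w u * (2 powr x0 - 1) + 2 powr x0 * ln 2 * (T u - x0 * w u)" for u
  have tangent_eq_iff: "tangent u = rate_cost (T u) (w u) \<longleftrightarrow> T u * sum w S = sum T S * w u"
    if "u \<in> S" for u
  proof -
    have "tangent u = rate_cost (T u) (w u) \<longleftrightarrow> T u = x0 * w u"
      unfolding tangent_def by (rule rate_cost_eq_tangent_iff[OF assms(2)[OF that]])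
    also have "\<dots> \<longleftrightarrow> T u * sum w S = sum T S * w u"
      unfolding x0_def using W_pos by (auto simp: field_simps)
    finally show ?thesis .
  qed
  have tangent_sum: "sum tangent S = rate_cost (sum T S) (sum w S)"
    unfolding tangent_def x0_def by (rule sum_rate_cost_tangent[OF W_pos])
  have "rate_cost (sum T S) (sum w S) = (\<Sum>u\<in>S. rate_cost (T u) (w u))
        \<longleftrightarrow> (\<forall>u\<in>S. tangent u = rate_cost (T u) (w u))"
    unfolding tangent_sum[symmetric] using assms(2)
    by (intro sum_eq_sum_iff_of_le[OF assms(1)]) (simp add: tangent_def rate_cost_ge_tangent)
  also have "\<dots> \<longleftrightarrow> (\<forall>u\<in>S. T u * sum w S = sum T S * w u)"
    using tangent_eq_iff by blast
  finally show ?thesis .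
qed

lemma rate_cost_pos:
  assumes "0 < t" "0 < w"
  shows "0 < rate_cost t w"
  using assms unfolding rate_cost_def by simp

lemma req_power_eq_rate_cost:
  "req_power g N0 Gam l t w = g * N0 * Gam / l * rate_cost t w"
  unfolding req_power_def rate_cost_def by simp

lemma req_power_div_eq:
  assumes "0 < w" "0 < w'" "t / w = t' / w'"
  shows "req_power g N0 Gam l t w / w = req_power g N0 Gam l t' w' / w'"
  using assms unfolding req_power_def by simp

lemma req_power_sum_le:
  fixes T w :: "'a \<Rightarrow> real"
  assumes "finite S" "\<And>u. u \<in> S \<Longrightarrow> 0 < w u" "0 \<le> g * N0 * Gam / l"
  shows "req_power g N0 Gam l (sum T S) (sum w S) \<le> (\<Sum>u\<in>S. req_power g N0 Gam l (T u) (w u))"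
  unfolding req_power_eq_rate_cost sum_distrib_left[symmetric]
  using assms by (intro mult_left_mono rate_cost_sum_le)

lemma req_power_sum_eq_iff:
  fixes T w :: "'a \<Rightarrow> real"
  assumes "finite S" "\<And>u. u \<in> S \<Longrightarrow> 0 < w u" "g * N0 * Gam / l \<noteq> 0"
  shows "req_power g N0 Gam l (sum T S) (sum w S) = (\<Sum>u\<in>S. req_power g N0 Gam l (T u) (w u))
         \<longleftrightarrow> (\<forall>u\<in>S. T u * sum w S = sum T S * w u)"
  unfolding req_power_eq_rate_cost sum_distrib_left[symmetric]
  using assms rate_cost_sum_eq_iff[OF assms(1,2), where T = T] by simp

lemma group_power_le_sum_user_power:
  assumes "user_feasible K U Wk w" "k \<in> K" "finite (U k)" "0 < ell k" "0 < g * N0 * Gam"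
  shows "req_power g N0 Gam (ell k) (group_traffic U T k) (Wk k)
         \<le> (\<Sum>u\<in>U k. user_power g N0 Gam ell T k w u)"
proof -
  have "\<forall>u\<in>U k. 0 < w u" and "sum w (U k) = Wk k"
    using assms(1,2) unfolding user_feasible_def by auto
  moreover have "0 \<le> g * N0 * Gam / ell k" using assms(4,5) by simp
  ultimately show ?thesis
    using req_power_sum_le[OF assms(3), where T = T and w = w]
    unfolding user_power_def group_traffic_def by simp
qed

lemma group_power_eq_sum_user_power_iff:
  assumes "user_feasible K U Wk w" "k \<in> K" "finite (U k)" "0 < ell k" "0 < g * N0 * Gam"
  shows "req_power g N0 Gam (ell k) (group_traffic U T k) (Wk k)
           = (\<Sum>u\<in>U k. user_power g N0 Gam ell T k w u)
         \<longleftrightarrow> (\<forall>u\<in>U k. T u * Wk k = group_traffic U T k * w u)"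
proof -
  have "\<forall>u\<in>U k. 0 < w u" and "sum w (U k) = Wk k"
    using assms(1,2) unfolding user_feasible_def by auto
  moreover have "g * N0 * Gam / ell k \<noteq> 0" using divide_pos_pos[OF assms(5,4)] by linarith
  ultimately show ?thesis
    using req_power_sum_eq_iff[OF assms(3), where T = T and w = w]
    unfolding user_power_def group_traffic_def by simp
qed

lemma maximizer_of_ratio_iff_minimizer:
  fixes C :: "'a \<Rightarrow> real"
  assumes "0 < N" "0 < m" "\<And>x. x \<in> F \<Longrightarrow> m \<le> C x" "x0 \<in> F" "C x0 = m"
  shows "(x \<in> F \<and> (\<forall>y\<in>F. N / C y \<le> N / C x)) \<longleftrightarrow> x \<in> F \<and> C x = m"
proof -
  have "C x = m" if "x \<in> F" "N / m \<le> N / C x"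
  proof -
    have "m \<le> C x" using assms(3) that(1) by blast
    with that(2) show ?thesis
      using assms(1,2) by (smt (verit) divide_strict_left_mono mult_pos_pos)
  qed
  moreover have "N / C y \<le> N / m" if "y \<in> F" for y
    using assms(1-3) that by (simp add: frac_le)
  ultimately show ?thesis using assms(4,5) by metis
qed

lemma ex_fun_on_disjoint_family:
  assumes "\<And>k k'. k \<in> K \<Longrightarrow> k' \<in> K \<Longrightarrow> k \<noteq> k' \<Longrightarrow> U k \<inter> U k' = {}"
  shows "\<exists>w. \<forall>k\<in>K. \<forall>u\<in>U k. w u = f k u"
proof -
  have "(SOME k. k \<in> K \<and> u \<in> U k) = k" if "k \<in> K" "u \<in> U k" for k u
    by (rule some_equality) (use that assms in auto)
  then show ?thesis by (intro exI[of _ "\<lambda>u. f (SOME k. k \<in> K \<and> u \<in> U k) u"]) simp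
qed

lemma proportional_allocation_user_feasible:
  assumes "\<And>k. k \<in> K \<Longrightarrow> 0 < Wk k" "\<And>k. k \<in> K \<Longrightarrow> 0 < group_traffic U T k"
    and "\<And>u. 0 < T u"
    and "\<forall>k\<in>K. \<forall>u\<in>U k. w u = Wk k * T u / group_traffic U T k"
  shows "user_feasible K U Wk w"
  unfolding user_feasible_def
proof (intro ballI conjI)
  fix k assume k: "k \<in> K"
  show "0 < w u" if "u \<in> U k" for u
    using assms k that by simp
  have "(\<Sum>u\<in>U k. w u) = Wk k / group_traffic U T k * (\<Sum>u\<in>U k. T u)"
    using assms(4) k by (simp add: sum_distrib_left)
  then show "(\<Sum>u\<in>U k. w u) = Wk k"
    using assms(2)[OF k] unfolding group_traffic_def by simp
qed

lemma user_optimal_iff_proportional: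
  assumes finK: "finite K" and finU: "\<And>k. k \<in> K \<Longrightarrow> finite (U k)"
    and neU: "\<And>k. k \<in> K \<Longrightarrow> U k \<noteq> {}"
    and disj: "\<And>k k'. k \<in> K \<Longrightarrow> k' \<in> K \<Longrightarrow> k \<noteq> k' \<Longrightarrow> U k \<inter> U k' = {}"
    and ell_pos: "\<And>k. k \<in> K \<Longrightarrow> 0 < ell k" and T_pos: "\<And>u. 0 < T u"
    and coeff_pos: "0 < g * N0 * Gam" and c_pos: "0 < c"
    and Wk_pos: "\<And>k. k \<in> K \<Longrightarrow> 0 < Wk k"
  shows "user_optimal c g N0 Gam K U ell T Wk w
         \<longleftrightarrow> (\<forall>k\<in>K. \<forall>u\<in>U k. w u = Wk k * T u / group_traffic U T k)"
    (is "_ \<longleftrightarrow> ?proportional w")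
proof (cases "K = {}")
  case True
  then show ?thesis unfolding user_optimal_def user_feasible_def user_EE_def by simp
next
  case False
  define F where "F = Collect (user_feasible K U Wk)"
  define N where "N = c * (\<Sum>k\<in>K. \<Sum>u\<in>U k. T u)"
  define C where "C w = (\<Sum>k\<in>K. \<Sum>u\<in>U k. user_power g N0 Gam ell T k w u)" for w
  define m where "m = (\<Sum>k\<in>K. req_power g N0 Gam (ell k) (group_traffic U T k) (Wk k))"
  have traffic_pos: "0 < group_traffic U T k" if "k \<in> K" for k
    unfolding group_traffic_def using that finU neU T_pos by (simp add: sum_pos)
  have N_pos: "0 < N"
    unfolding N_def using False finK c_pos traffic_pos
    by (simp add: sum_pos group_traffic_def)
  have "0 < req_power g N0 Gam (ell k) (group_traffic U T k) (Wk k)" if "k \<in> K" for k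
    unfolding req_power_eq_rate_cost
    by (rule mult_pos_pos[OF divide_pos_pos[OF coeff_pos ell_pos[OF that]]
          rate_cost_pos[OF traffic_pos[OF that] Wk_pos[OF that]]])
  then have m_pos: "0 < m" unfolding m_def using False finK by (simp add: sum_pos)
  have m_le: "m \<le> C w'" if "w' \<in> F" for w'
    unfolding m_def C_def using that finU ell_pos coeff_pos
    by (intro sum_mono group_power_le_sum_user_power) (auto simp: F_def)
  have C_eq_iff: "C w' = m \<longleftrightarrow> ?proportional w'" if "w' \<in> F" for w'
  proof -
    have feasible: "user_feasible K U Wk w'" using that unfolding F_def by simp
    have "C w' = m \<longleftrightarrow> m = C w'" by (rule eq_commute)
    also have "\<dots> \<longleftrightarrow> (\<forall>k\<in>K. req_power g N0 Gam (ell k) (group_traffic U T k) (Wk k)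
                                 = (\<Sum>u\<in>U k. user_power g N0 Gam ell T k w' u))"
      unfolding m_def C_def using finU ell_pos coeff_pos feasible
      by (intro sum_eq_sum_iff_of_le[OF finK] group_power_le_sum_user_power)
    also have "\<dots> \<longleftrightarrow> (\<forall>k\<in>K. \<forall>u\<in>U k. T u * Wk k = group_traffic U T k * w' u)"
      by (intro ball_cong[OF refl] group_power_eq_sum_user_power_iff[OF feasible]
          finU ell_pos coeff_pos)
    also have "\<dots> \<longleftrightarrow> ?proportional w'"
    proof (intro ball_cong[OF refl])
      fix k u assume "k \<in> K"
      then show "T u * Wk k = group_traffic U T k * w' u
                 \<longleftrightarrow> w' u = Wk k * T u / group_traffic U T k"
        using traffic_pos[of k] by (auto simp: eq_divide_eq ac_simps)
    qed
    finally show ?thesis .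
  qed
  have proportional_in_F: "w' \<in> F" if "?proportional w'" for w'
    unfolding F_def
    using proportional_allocation_user_feasible[OF Wk_pos traffic_pos T_pos that] by simp
  have "\<exists>w0. ?proportional w0" by (rule ex_fun_on_disjoint_family[OF disj])
  then obtain w0 where "?proportional w0" ..
  then have w0_in_F: "w0 \<in> F" and C_w0: "C w0 = m" using proportional_in_F C_eq_iff by blast+
  note ratio_iff = maximizer_of_ratio_iff_minimizer[where F = F and C = C and N = N and m = m,
      OF N_pos m_pos m_le w0_in_F C_w0]
  have "user_optimal c g N0 Gam K U ell T Wk w \<longleftrightarrow> w \<in> F \<and> (\<forall>y\<in>F. N / C y \<le> N / C w)"
    unfolding user_optimal_def user_EE_def F_def N_def C_def by simp
  also have "\<dots> \<longleftrightarrow> ?proportional w"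
    using ratio_iff[of w] C_eq_iff[of w] proportional_in_F[of w] by blast
  finally show ?thesis .
qed

theorem theorem2:
  fixes K :: "'k set" and U :: "'k \<Rightarrow> 'u set"
    and ell :: "'k \<Rightarrow> real" and ell_u :: "'u \<Rightarrow> real" and eps :: real
    and T :: "'u \<Rightarrow> real"
    and g N0 Gam c W :: real
    and Wk Pk :: "'k \<Rightarrow> real"
  assumes finK: "finite K"
    and finU: "\<And>k. k \<in> K \<Longrightarrow> finite (U k)"
    and neU: "\<And>k. k \<in> K \<Longrightarrow> U k \<noteq> {}"
    and disj: "\<And>k k'. k \<in> K \<Longrightarrow> k' \<in> K \<Longrightarrow> k \<noteq> k' \<Longrightarrow> U k \<inter> U k' = {}"
    and ell_pos: "\<And>k. k \<in> K \<Longrightarrow> 0 < ell k"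
    and grouping: "\<And>k u. k \<in> K \<Longrightarrow> u \<in> U k \<Longrightarrow> \<bar>ell_u u - ell k\<bar> \<le> eps"
    and T_pos: "\<And>u. 0 < T u"
    and g_pos: "0 < g" and N0_pos: "0 < N0" and Gam_pos: "0 < Gam"
    and c_range: "0 < c" "c < 1"
    and W_pos: "0 < W"
    and sol: "group_optimal c g N0 Gam W K U ell T Wk Pk"
  shows "(\<forall>w. user_optimal c g N0 Gam K U ell T Wk w \<longleftrightarrow>
              (\<forall>k\<in>K. \<forall>u\<in>U k. w u = Wk k * T u / group_traffic U T k))
       \<and> (\<forall>k\<in>K. \<forall>u\<in>U k.
            let w = (\<lambda>v. Wk k * T v / group_traffic U T k)
            in user_power g N0 Gam ell T k w u / w u = Pk k / Wk k)"
proof -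
  txt \<open>Only the feasibility of \<open>(Wk, Pk)\<close> is used, not its optimality.\<close>
  have Wk_pos: "\<And>k. k \<in> K \<Longrightarrow> 0 < Wk k"
    and Pk_eq: "\<And>k. k \<in> K \<Longrightarrow> Pk k = req_power g N0 Gam (ell k) (group_traffic U T k) (Wk k)"
    using sol unfolding group_optimal_def group_feasible_def by blast+
  have traffic_pos: "\<And>k. k \<in> K \<Longrightarrow> 0 < group_traffic U T k"
    unfolding group_traffic_def using finU neU T_pos by (simp add: sum_pos)
  have psd: "user_power g N0 Gam ell T k (\<lambda>v. Wk k * T v / group_traffic U T k) u
               / (Wk k * T u / group_traffic U T k) = Pk k / Wk k"
    if "k \<in> K" for k u
  proof -
    have "0 < Wk k * T u / group_traffic U T k"
      using Wk_pos[OF that] traffic_pos[OF that] T_pos[of u] by simp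
    moreover have "T u / (Wk k * T u / group_traffic U T k) = group_traffic U T k / Wk k"
      using Wk_pos[OF that] traffic_pos[OF that] T_pos[of u] by simp
    ultimately show ?thesis
      unfolding user_power_def Pk_eq[OF that] by (rule req_power_div_eq[OF _ Wk_pos[OF that]])
  qed
  have "0 < g * N0 * Gam" using g_pos N0_pos Gam_pos by simp
  note optimal_iff = user_optimal_iff_proportional[where K = K and U = U and ell = ell and T = T
      and Wk = Wk, OF finK finU neU disj ell_pos T_pos this c_range(1) Wk_pos]
  show ?thesis
    unfolding Let_def using optimal_iff psd by simp
qed

end
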